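(* The set $\mathcal{I}_{\mathrm{str}}(\Omega_1)$ has the cardinality of the continuum.
   Context: Let $\mathbf{2}=\{0,1\}$. A partial function of arity $n$ on $\mathbf{2}$ is a map $f:\operatorname{dom} f\to\mathbf{2}$ with $\operatorname{dom} f\subseteq \mathbf{2}^n$; it is total if $\operatorname{dom} f=\mathbf{2}^n$. $P_{\mathbf{2}}$ is the set of all partial functions, $O_{\mathbf{2}}$ the set of total ones. Composition $F=f(g_1,\dots,g_n)$ is given by $F(\mathbf{x})=f(g_1(\mathbf{x}),\dots,g_n(\mathbf{x}))$ on $\operatorname{dom} F=\{\mathbf{x}\in\bigcap_i\operatorname{dom} g_i : (g_1(\mathbf{x}),\dots,g_n(\mathbf{x}))\in\operatorname{dom} f\}$. A partial clone is a composition-closed subset of $P_{\mathbf{2}}$ containing all projections; a total clone is one contained in $O_{\mathbf{2}}$. A partial clone $X$ is strong if it contains every restriction of each of its members. For a total clone $C$, $\mathcal{I}_{\mathrm{str}}(C)$ is the set of all strong partial clones $X$ with $X\cap O_{\mathbf{2}}=C$. $\Omega_1$ is the total clone generated by all unary total Boolean functions. *)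

theory Defs
  imports Complex_Main "HOL-Library.Equipollence"
begin

text \<open>A partial Boolean function of arity n is a pair (n, f) where f maps
  argument tuples (bool lists of length n; True = 1, False = 0) to an optional value;
  f xs = None means xs is outside the domain.\<close>
type_synonym pfun = "nat \<times> (bool list \<Rightarrow> bool option)"

definition P2 :: "pfun set" where
  "P2 = {(n, f). 1 \<le> n \<and> (\<forall>xs. f xs \<noteq> None \<longrightarrow> length xs = n)}"

definition O2 :: "pfun set" where
  "O2 = {(n, f). (n, f) \<in> P2 \<and> (\<forall>xs. length xs = n \<longrightarrow> f xs \<noteq> None)}"

definition proj :: "nat \<Rightarrow> nat \<Rightarrow> pfun" where
  "proj n i = (n, \<lambda>xs. if length xs = n then Some (xs ! i) else None)"

definition compose :: "pfun \<Rightarrow> nat \<Rightarrow> (bool list \<Rightarrow> bool option) list \<Rightarrow> pfun" where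
  "compose F m gs = (m, \<lambda>xs. if length xs = m \<and> (\<forall>g\<in>set gs. g xs \<noteq> None)
                             then snd F (map (\<lambda>g. the (g xs)) gs) else None)"

definition partial_clone :: "pfun set \<Rightarrow> bool" where
  "partial_clone X \<longleftrightarrow> X \<subseteq> P2
     \<and> (\<forall>n i. 1 \<le> n \<and> i < n \<longrightarrow> proj n i \<in> X)
     \<and> (\<forall>n f m gs. (n, f) \<in> X \<and> 1 \<le> m \<and> length gs = n \<and> (\<forall>g\<in>set gs. (m, g) \<in> X)
            \<longrightarrow> compose (n, f) m gs \<in> X)"

definition total_clone :: "pfun set \<Rightarrow> bool" where
  "total_clone C \<longleftrightarrow> partial_clone C \<and> C \<subseteq> O2"

definition strong :: "pfun set \<Rightarrow> bool" where
  "strong X \<longleftrightarrow> (\<forall>n f g. (n, f) \<in> X \<and> g \<subseteq>\<^sub>m f \<longrightarrow> (n, g) \<in> X)"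

definition clone_gen :: "pfun set \<Rightarrow> pfun set" where
  "clone_gen F = \<Inter>{C. partial_clone C \<and> F \<subseteq> C}"

definition Omega1 :: "pfun set" where
  "Omega1 = clone_gen {F \<in> O2. fst F = 1}"

definition I_str :: "pfun set \<Rightarrow> pfun set set" where
  "I_str C = {X. partial_clone X \<and> strong X \<and> X \<inter> O2 = C}"

end

theory Submission
  imports Defs "HOL-Number_Theory.Cong" "HOL-Analysis.Analysis"
begin

text \<open>
  For a set Rs of Boolean relations, the partial functions preserving all of them form a strong
  partial clone Pol Rs. If each relation is closed under negation and contains the constant
  tuples, Pol Rs contains all unary functions and hence Omega1. If moreover Rs contains
  sigma = {(a, b, c, d). a = b \<or> c = d}, a total member of Pol Rs depends on at most one
  variable: flipping a single essential coordinate i changes its value, and sigma then forces any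
  two tuples agreeing at i to have the same value. So Pol Rs \<inter> O2 = Omega1.

  For a prime p, let tau_p be the 2p-ary relation of tuples whose weight is divisible by p, and
  h_p the partial function defined on the 2p rows of the matrix whose columns are all vectors of
  weight p, taking value 1 exactly on the first row. Then h_p preserves sigma and every tau_q with
  q \<noteq> p, but not tau_p. Hence A \<mapsto> Pol ({sigma} \<union> {tau_q | q prime, q \<notin> A}) embeds the power
  set of the primes into I_str Omega1, which in turn consists of subsets of the countable set P2.
\<close>

section \<open>Partial polymorphisms\<close>

text \<open>The argument tuples rs are the rows of a matrix whose columns are the tuples of R.\<close>

definition preserves :: "bool list set \<Rightarrow> pfun \<Rightarrow> bool" where
  "preserves R F \<longleftrightarrow> (\<forall>rs. (\<forall>r\<in>set rs. snd F r \<noteq> None) \<and> (\<forall>l<fst F. map (\<lambda>r. r!l) rs \<in> R)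
      \<longrightarrow> map (\<lambda>r. the (snd F r)) rs \<in> R)"

definition Pol :: "bool list set set \<Rightarrow> pfun set" where
  "Pol Rs = {F \<in> P2. \<forall>R\<in>Rs. preserves R F}"

lemma preserves_proj:
  assumes "i < n"
  shows "preserves R (proj n i)"
  unfolding preserves_def
proof (intro allI impI)
  fix rs
  assume "(\<forall>r\<in>set rs. snd (proj n i) r \<noteq> None) \<and> (\<forall>l<fst (proj n i). map (\<lambda>r. r!l) rs \<in> R)"
  then have lengths: "\<forall>r\<in>set rs. length r = n" and columns: "\<forall>l<n. map (\<lambda>r. r!l) rs \<in> R"
    by (auto simp: proj_def split: if_splits)
  have "map (\<lambda>r. the (snd (proj n i) r)) rs = map (\<lambda>r. r!i) rs"
    using lengths by (auto simp: proj_def intro: map_cong)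
  moreover have "map (\<lambda>r. r!i) rs \<in> R"
    using columns assms by blast
  ultimately show "map (\<lambda>r. the (snd (proj n i) r)) rs \<in> R"
    by (simp only:)
qed

lemma preserves_compose:
  assumes f: "preserves R (n, f)" and "length gs = n" and gs: "\<forall>g\<in>set gs. preserves R (m, g)"
  shows "preserves R (compose (n, f) m gs)"
  unfolding preserves_def
proof (intro allI impI)
  fix rs
  assume rs: "(\<forall>r\<in>set rs. snd (compose (n, f) m gs) r \<noteq> None) \<and>
    (\<forall>l<fst (compose (n, f) m gs). map (\<lambda>r. r!l) rs \<in> R)"
  define inner where "inner r = map (\<lambda>g. the (g r)) gs" for r
  have dom: "length r = m \<and> (\<forall>g\<in>set gs. g r \<noteq> None) \<and> f (inner r) \<noteq> None" if "r \<in> set rs" for r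
  proof -
    have "snd (compose (n, f) m gs) r \<noteq> None"
      using rs that by blast
    then show ?thesis
      by (simp add: compose_def inner_def split: if_splits)
  qed
  have value_columns: "map (\<lambda>r. the (g r)) rs \<in> R" if "g \<in> set gs" for g
    using gs rs dom that unfolding preserves_def by (auto simp: compose_def)
  define inner_rows where "inner_rows = map inner rs"
  have "\<forall>l<n. map (\<lambda>r. r!l) inner_rows \<in> R"
    using value_columns \<open>length gs = n\<close> by (auto simp: inner_rows_def inner_def comp_def)
  moreover have "\<forall>r\<in>set inner_rows. f r \<noteq> None"
    using dom by (auto simp: inner_rows_def)
  ultimately have "map (\<lambda>r. the (f r)) inner_rows \<in> R"
    using f unfolding preserves_def by auto
  moreover have "map (\<lambda>r. the (f r)) inner_rows = map (\<lambda>r. the (snd (compose (n, f) m gs) r)) rs"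
    using dom by (auto simp: compose_def inner_rows_def inner_def)
  ultimately show "map (\<lambda>r. the (snd (compose (n, f) m gs) r)) rs \<in> R"
    by (simp only:)
qed

lemma preserves_restriction:
  assumes "preserves R (n, f)" and "g \<subseteq>\<^sub>m f"
  shows "preserves R (n, g)"
  unfolding preserves_def
proof (intro allI impI)
  fix rs
  assume rs: "(\<forall>r\<in>set rs. snd (n, g) r \<noteq> None) \<and> (\<forall>l<fst (n, g). map (\<lambda>r. r!l) rs \<in> R)"
  then have agree: "\<forall>r\<in>set rs. g r = f r"
    using \<open>g \<subseteq>\<^sub>m f\<close> by (auto simp: map_le_def)
  then have "map (\<lambda>r. the (f r)) rs \<in> R"
    using assms(1) rs unfolding preserves_def by auto
  moreover have "map (\<lambda>r. the (g r)) rs = map (\<lambda>r. the (f r)) rs"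
    using agree by simp
  ultimately show "map (\<lambda>r. the (snd (n, g) r)) rs \<in> R"
    by (simp only: snd_conv)
qed

lemma compose_in_P2: "1 \<le> m \<Longrightarrow> compose F m gs \<in> P2"
  by (auto simp: P2_def compose_def split: if_splits)

lemma proj_in_P2: "1 \<le> n \<Longrightarrow> proj n i \<in> P2"
  by (auto simp: P2_def proj_def split: if_splits)

lemma partial_clone_Pol: "partial_clone (Pol Rs)"
  unfolding partial_clone_def Pol_def
  by (auto simp: proj_in_P2 preserves_proj compose_in_P2 intro!: preserves_compose)

lemma strong_Pol: "strong (Pol Rs)"
  unfolding strong_def Pol_def
  by (auto simp: P2_def map_le_def dom_def intro: preserves_restriction)

lemma partial_clone_O2: "partial_clone O2"
  unfolding partial_clone_def
proof (intro conjI allI impI)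
  show "O2 \<subseteq> P2"
    by (auto simp: O2_def)
next
  fix n i :: nat
  assume "1 \<le> n \<and> i < n"
  then show "proj n i \<in> O2"
    using proj_in_P2 by (auto simp: O2_def proj_def)
next
  fix n f m gs
  assume "(n, f) \<in> O2 \<and> 1 \<le> m \<and> length gs = n \<and> (\<forall>g\<in>set gs. (m, g) \<in> O2)"
  then show "compose (n, f) m gs \<in> O2"
    using compose_in_P2 by (auto simp: O2_def compose_def)
qed

lemma Omega1_subset:
  assumes "partial_clone C" and "{F \<in> O2. fst F = 1} \<subseteq> C"
  shows "Omega1 \<subseteq> C"
  using assms unfolding Omega1_def clone_gen_def by blast

lemma Omega1_subset_O2: "Omega1 \<subseteq> O2"
  by (rule Omega1_subset[OF partial_clone_O2]) auto

definition unary_closed :: "bool list set \<Rightarrow> bool" where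
  "unary_closed R \<longleftrightarrow>
     (\<forall>xs\<in>R. map Not xs \<in> R \<and> replicate (length xs) True \<in> R \<and> replicate (length xs) False \<in> R)"

lemma map_unary_in_unary_closed:
  fixes \<phi> :: "bool \<Rightarrow> bool"
  assumes "unary_closed R" and "xs \<in> R"
  shows "map \<phi> xs \<in> R"
proof -
  have "\<phi> = id \<or> \<phi> = Not \<or> \<phi> = (\<lambda>_. True) \<or> \<phi> = (\<lambda>_. False)"
    by (cases "\<phi> True"; cases "\<phi> False") (auto simp: fun_eq_iff all_bool_eq)
  then show ?thesis
    using assms by (auto simp: unary_closed_def map_replicate_const)
qed

lemma preserves_unary:
  assumes "(1, u) \<in> O2" and "unary_closed R"
  shows "preserves R (1, u)"
  unfolding preserves_def
proof (intro allI impI)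
  fix rs
  assume rs: "(\<forall>r\<in>set rs. snd (1, u) r \<noteq> None) \<and> (\<forall>l<fst (1, u). map (\<lambda>r. r!l) rs \<in> R)"
  have "\<forall>r\<in>set rs. length r = 1"
    using assms(1) rs by (auto simp: O2_def P2_def)
  then have "map (\<lambda>r. the (u r)) rs = map (\<lambda>r. the (u [r!0])) rs"
    by (intro map_cong) (auto simp: length_Suc_conv)
  then have "map (\<lambda>r. the (u r)) rs = map (\<lambda>b. the (u [b])) (map (\<lambda>r. r!0) rs)"
    by (simp only: map_map comp_def)
  moreover have "map (\<lambda>b. the (u [b])) (map (\<lambda>r. r!0) rs) \<in> R"
    using rs assms(2) by (intro map_unary_in_unary_closed) auto
  ultimately show "map (\<lambda>r. the (snd (1, u) r)) rs \<in> R"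
    by (simp only: snd_conv)
qed

lemma Omega1_subset_Pol:
  assumes "\<forall>R\<in>Rs. unary_closed R"
  shows "Omega1 \<subseteq> Pol Rs"
proof (rule Omega1_subset[OF partial_clone_Pol], safe)
  fix n u
  assume "(n, u) \<in> O2" and "fst (n, u) = 1"
  then show "(n, u) \<in> Pol Rs"
    using assms preserves_unary by (auto simp: Pol_def O2_def)
qed

section \<open>Total functions preserving sigma\<close>

definition sigma_rel :: "bool list set" where
  "sigma_rel = {xs. length xs = 4 \<and> (xs!0 = xs!1 \<or> xs!2 = xs!3)}"

lemma preserves_sigmaD:
  assumes "preserves sigma_rel (n, f)"
    and "f x1 \<noteq> None" "f x2 \<noteq> None" "f x3 \<noteq> None" "f x4 \<noteq> None"
    and "\<forall>l<n. x1!l = x2!l \<or> x3!l = x4!l"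
  shows "f x1 = f x2 \<or> f x3 = f x4"
proof -
  have "(\<forall>r\<in>set [x1, x2, x3, x4]. f r \<noteq> None) \<and> (\<forall>l<n. map (\<lambda>r. r!l) [x1, x2, x3, x4] \<in> sigma_rel)"
    using assms(2-6) by (simp add: sigma_rel_def)
  then have "map (\<lambda>r. the (f r)) [x1, x2, x3, x4] \<in> sigma_rel"
    using assms(1) unfolding preserves_def fst_conv snd_conv by blast
  then show ?thesis
    using assms(2-5) by (auto simp: sigma_rel_def)
qed

lemma exists_neighbours_with_different_values:
  fixes g :: "bool list \<Rightarrow> 'b"
  shows "length x = n \<Longrightarrow> length y = n \<Longrightarrow> g x \<noteq> g y \<Longrightarrow>
    \<exists>a b i. length a = n \<and> length b = n \<and> g a \<noteq> g b \<and> i < n \<and> (\<forall>l<n. l \<noteq> i \<longrightarrow> a!l = b!l)"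
proof (induction "card {l. l < n \<and> x!l \<noteq> y!l}" arbitrary: x y rule: less_induct)
  case less
  define D where "D = {l. l < n \<and> x!l \<noteq> y!l}"
  have "D \<noteq> {}"
    using less.prems nth_equalityI[of x y] by (auto simp: D_def)
  then obtain i where "i \<in> D"
    by blast
  define z where "z = x[i := y!i]"
  have "i < n" and "length z = n"
    using \<open>i \<in> D\<close> less.prems(1) by (auto simp: D_def z_def)
  have x_z: "\<forall>l<n. l \<noteq> i \<longrightarrow> x!l = z!l"
    by (simp add: z_def)
  have "{l. l < n \<and> z!l \<noteq> y!l} = D - {i}"
    using less.prems(1) \<open>i \<in> D\<close> by (auto simp: D_def z_def nth_list_update)
  moreover have "card (D - {i}) < card D"
    using \<open>i \<in> D\<close> by (intro card_Diff1_less) (simp_all add: D_def)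
  ultimately have closer: "card {l. l < n \<and> z!l \<noteq> y!l} < card D"
    by simp
  show ?case
  proof (cases "g x = g z")
    case True
    then have "g z \<noteq> g y"
      using less.prems(3) by simp
    then show ?thesis
      using less.hyps[OF closer[unfolded D_def] \<open>length z = n\<close> less.prems(2)] by blast
  next
    case False
    then show ?thesis
      using less.prems(1) \<open>i < n\<close> \<open>length z = n\<close> x_z
      by (intro exI[of _ x] exI[of _ z] exI[of _ i]) simp
  qed
qed

lemma total_preserving_sigma_essentially_unary:
  assumes "preserves sigma_rel (n, f)" and "(n, f) \<in> O2"
  shows "\<exists>i<n. \<forall>x y. length x = n \<and> length y = n \<and> x!i = y!i \<longrightarrow> f x = f y"
proof (cases "\<forall>x y. length x = n \<and> length y = n \<longrightarrow> f x = f y")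
  case True
  moreover have "0 < n"
    using assms(2) by (simp add: O2_def P2_def)
  ultimately show ?thesis
    by blast
next
  case False
  then obtain x y where "length x = n" "length y = n" "f x \<noteq> f y"
    by blast
  then obtain a b i where ab: "length a = n" "length b = n" "f a \<noteq> f b" "i < n"
    and agree: "\<forall>l<n. l \<noteq> i \<longrightarrow> a!l = b!l"
    using exists_neighbours_with_different_values[of x n y f] by blast
  have total: "f z \<noteq> None" if "length z = n" for z
    using assms(2) that by (simp add: O2_def)
  have "f x = f y" if "length x = n" "length y = n" "x!i = y!i" for x y
  proof -
    have "\<forall>l<n. a!l = b!l \<or> x!l = y!l"
      using agree that(3) by blast
    then show ?thesis
      using preserves_sigmaD[OF assms(1) total total total total] ab that by blast
  qed
  then show ?thesis
    using \<open>i < n\<close> by blast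
qed

lemma essentially_unary_in_Omega1:
  assumes "(n, f) \<in> O2" and "i < n"
    and depends: "\<forall>x y. length x = n \<and> length y = n \<and> x!i = y!i \<longrightarrow> f x = f y"
  shows "(n, f) \<in> Omega1"
proof -
  define u where "u ys = (if length ys = 1 then f (replicate n (hd ys)) else None)" for ys
  have "(1, u) \<in> O2"
    using assms(1) by (auto simp: O2_def P2_def u_def)
  have "(n, f) = compose (1, u) n [snd (proj n i)]"
  proof -
    have "f xs = (if length xs = n then u [xs!i] else None)" for xs
      using assms(1,2) depends[rule_format, of "replicate n (xs!i)" xs]
      by (auto simp: u_def O2_def P2_def)
    then show ?thesis
      by (auto simp: compose_def proj_def fun_eq_iff)
  qed
  moreover have "compose (1, u) n [snd (proj n i)] \<in> C"
    if "partial_clone C" and "{F \<in> O2. fst F = 1} \<subseteq> C" for C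
  proof -
    have "(1, u) \<in> C"
      using \<open>(1, u) \<in> O2\<close> that(2) by auto
    moreover have "proj n i \<in> C"
      using that(1) assms(2) unfolding partial_clone_def by simp
    then have "(n, snd (proj n i)) \<in> C"
      by (simp add: proj_def)
    ultimately show ?thesis
      using that(1) assms(2) unfolding partial_clone_def
      by (auto dest!: spec[of _ 1] spec[of _ u] spec[of _ n] spec[of _ "[snd (proj n i)]"])
  qed
  ultimately show ?thesis
    unfolding Omega1_def clone_gen_def by auto
qed

lemma total_preserving_sigma_in_Omega1:
  assumes "F \<in> O2" and "preserves sigma_rel F"
  shows "F \<in> Omega1"
  using assms total_preserving_sigma_essentially_unary essentially_unary_in_Omega1
  by (cases F) blast

section \<open>The relations tau_p and the functions h_p\<close>

lemma dvd_if_dvd_all_half_sums: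
  fixes f :: "nat \<Rightarrow> nat"
  assumes "0 < p" and "coprime q p"
    and sums: "\<And>T. T \<subseteq> {..<2*p} \<Longrightarrow> card T = p \<Longrightarrow> q dvd sum f T"
  shows "q dvd f 0"
proof -
  have "[f i = f 0] (mod q)" if "i < 2*p" for i
  proof (cases "i = 0")
    case False
    have "card ({..<2*p} - {i, 0}) = 2*p - 2"
      using False that by (subst card_Diff_subset) auto
    then have "\<exists>S. {} \<subseteq> S \<and> S \<subseteq> {..<2*p} - {i, 0} \<and> card S = p - 1"
      by (intro exists_subset_between) auto
    then obtain S where S: "S \<subseteq> {..<2*p} - {i, 0}" "card S = p - 1"
      by blast
    then have "finite S" "i \<notin> S" "0 \<notin> S"
      using finite_subset[OF S(1)] by auto
    have "q dvd sum f (insert i S)" and "q dvd sum f (insert 0 S)"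
      using S \<open>i \<notin> S\<close> \<open>0 \<notin> S\<close> \<open>finite S\<close> \<open>0 < p\<close> that
      by (intro sums; auto)+
    then have "[f i + sum f S = 0] (mod q)" "[f 0 + sum f S = 0] (mod q)"
      using \<open>finite S\<close> \<open>i \<notin> S\<close> \<open>0 \<notin> S\<close> by (simp_all add: cong_0_iff)
    then have "[f i + sum f S = f 0 + sum f S] (mod q)"
      by (metis cong_sym cong_trans)
    then show ?thesis
      by (simp add: cong_add_rcancel_nat)
  qed simp
  then have "[sum f {..<p} = sum (\<lambda>_. f 0) {..<p}] (mod q)"
    by (intro cong_sum) simp
  moreover have "q dvd sum f {..<p}"
    by (intro sums) auto
  ultimately have "q dvd p * f 0"
    using cong_dvd_iff by fastforce
  then show ?thesis
    using coprime_dvd_mult_right_iff[OF \<open>coprime q p\<close>] by blast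
qed

definition weight :: "bool list \<Rightarrow> nat" where
  "weight xs = length (filter id xs)"

lemma weight_map [simp]: "weight (map P xs) = length (filter P xs)"
  by (simp add: weight_def comp_def)

lemma weight_indicator:
  assumes "T \<subseteq> {..<n}"
  shows "weight (map (\<lambda>i. i \<in> T) [0..<n]) = card T"
proof -
  have "{i. i < n \<and> [0..<n] ! i \<in> T} = T"
    using assms by auto
  then show ?thesis
    by (simp add: length_filter_conv_card)
qed

lemma weight_Not: "weight (map Not xs) = length xs - weight xs"
  using sum_length_filter_compl[of id xs] by (simp add: weight_def)

lemma weight_replicate: "weight (replicate n b) = (if b then n else 0)"
  by (simp add: weight_def)

definition tau_rel :: "nat \<Rightarrow> bool list set" where
  "tau_rel p = {xs. length xs = 2*p \<and> p dvd weight xs}"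

definition balanced_columns :: "nat \<Rightarrow> bool list list" where
  "balanced_columns p = filter (\<lambda>c. weight c = p) (List.n_lists (2*p) [True, False])"

definition row :: "nat \<Rightarrow> nat \<Rightarrow> bool list" where
  "row p i = map (\<lambda>c. c!i) (balanced_columns p)"

text \<open>This is h_p; its domain consists of the 2p rows of the matrix with columns balanced_columns p.\<close>

definition first_row_indicator :: "nat \<Rightarrow> pfun" where
  "first_row_indicator p = (length (balanced_columns p),
     \<lambda>xs. if xs \<in> row p ` {..<2*p} then Some (xs = row p 0) else None)"

lemma set_balanced_columns: "set (balanced_columns p) = {c. length c = 2*p \<and> weight c = p}"
  by (auto simp: balanced_columns_def set_n_lists)

lemma nth_row: "l < length (balanced_columns p) \<Longrightarrow> row p i ! l = balanced_columns p ! l ! i"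
  by (simp add: row_def)

lemma length_row [simp]: "length (row p i) = length (balanced_columns p)"
  by (simp add: row_def)

lemma obtain_indicator_column:
  assumes "T \<subseteq> {..<2*p}" and "card T = p"
  obtains l where "l < length (balanced_columns p)"
    "balanced_columns p ! l = map (\<lambda>i. i \<in> T) [0..<2*p]"
proof -
  have "map (\<lambda>i. i \<in> T) [0..<2*p] \<in> set (balanced_columns p)"
    using assms weight_indicator[OF assms(1)] by (simp add: set_balanced_columns)
  then show ?thesis
    using that by (auto simp: in_set_conv_nth)
qed

lemma separating_column:
  assumes "2 \<le> p" and "i < 2*p" "j < 2*p" "k < 2*p" and "i \<noteq> j" "i \<noteq> k"
  obtains l where "l < length (balanced_columns p)" "row p i ! l" "\<not> row p j ! l" "\<not> row p k ! l"
proof -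
  have "card {j, k} \<le> 2"
    by (simp add: card_insert_if)
  then have "p \<le> card ({..<2*p} - {j, k})"
    using assms by (subst card_Diff_subset) auto
  then have "\<exists>T. {i} \<subseteq> T \<and> T \<subseteq> {..<2*p} - {j, k} \<and> card T = p"
    using assms by (intro exists_subset_between) auto
  then obtain T where T: "{i} \<subseteq> T" "T \<subseteq> {..<2*p} - {j, k}" "card T = p"
    by blast
  moreover have "T \<subseteq> {..<2*p}"
    using T(2) by blast
  ultimately obtain l where l: "l < length (balanced_columns p)"
    "balanced_columns p ! l = map (\<lambda>i. i \<in> T) [0..<2*p]"
    using obtain_indicator_column[of T p] by blast
  then have "row p m ! l \<longleftrightarrow> m \<in> T" if "m < 2*p" for m
    using that by (simp add: nth_row)
  then show ?thesis
    using that[OF l(1)] T assms by auto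
qed

lemma inj_on_row:
  assumes "2 \<le> p"
  shows "inj_on (row p) {..<2*p}"
proof
  fix i j
  assume "i \<in> {..<2*p}" "j \<in> {..<2*p}" "row p i = row p j"
  then show "i = j"
    using separating_column[OF assms, of i j j] by (metis lessThan_iff)
qed

lemma balanced_columns_nonempty: "2 \<le> p \<Longrightarrow> balanced_columns p \<noteq> []"
  using separating_column[of p 0 1 1] by fastforce

lemma first_row_indicator_in_P2: "2 \<le> p \<Longrightarrow> first_row_indicator p \<in> P2"
  using balanced_columns_nonempty[of p]
  by (auto simp: first_row_indicator_def P2_def Suc_le_eq split: if_splits)

lemma snd_first_row_indicator:
  "snd (first_row_indicator p) r = (if r \<in> row p ` {..<2*p} then Some (r = row p 0) else None)"
  by (simp add: first_row_indicator_def)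

lemma fst_first_row_indicator: "fst (first_row_indicator p) = length (balanced_columns p)"
  by (simp add: first_row_indicator_def)

lemma length_filter_mem_image:
  assumes "inj_on h T" and "finite T"
  shows "length (filter (\<lambda>r. r \<in> h ` T) rs) = (\<Sum>i\<in>T. count_list rs (h i))"
proof (induction rs)
  case (Cons r rs)
  have indicator: "(\<Sum>i\<in>T. if r = h i then 1 else 0) = (if r \<in> h ` T then 1 else (0::nat))"
  proof (cases "r \<in> h ` T")
    case True
    then obtain j where "j \<in> T" "r = h j"
      by blast
    then have "(\<Sum>i\<in>T. if r = h i then 1 else (0::nat)) = (\<Sum>i\<in>T. if i = j then 1 else 0)"
      using assms(1) by (intro sum.cong) (auto simp: inj_on_eq_iff)
    then show ?thesis
      using \<open>j \<in> T\<close> assms(2) True by simp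
  qed (auto intro!: sum.neutral)
  have "(\<Sum>i\<in>T. count_list (r # rs) (h i)) = (\<Sum>i\<in>T. count_list rs (h i) + (if r = h i then 1 else 0))"
    by (intro sum.cong) auto
  also have "\<dots> = (\<Sum>i\<in>T. count_list rs (h i)) + (if r \<in> h ` T then 1 else 0)"
    by (simp only: sum.distrib indicator)
  finally show ?case
    using Cons.IH by simp
qed simp

lemma first_row_indicator_domain:
  assumes "\<forall>r\<in>set rs. snd (first_row_indicator p) r \<noteq> None"
  shows "set rs \<subseteq> row p ` {..<2*p}"
  using assms by (auto simp: snd_first_row_indicator split: if_splits)

lemma first_row_indicator_values:
  assumes "set rs \<subseteq> row p ` {..<2*p}"
  shows "map (\<lambda>r. the (snd (first_row_indicator p) r)) rs = map (\<lambda>r. r = row p 0) rs"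
  using assms by (auto simp: snd_first_row_indicator)

lemma rows_with_different_values:
  assumes r: "r \<in> row p ` {..<2*p}" and r': "r' \<in> row p ` {..<2*p}"
    and differ: "(r = row p 0) \<noteq> (r' = row p 0)"
  obtains i where "0 < i" "i < 2*p" "{r, r'} = {row p 0, row p i}"
proof -
  obtain a b where "a < 2*p" "r = row p a" "b < 2*p" "r' = row p b"
    using r r' by auto
  show ?thesis
  proof (cases "r = row p 0")
    case True
    then have "b \<noteq> 0"
      using differ \<open>r' = row p b\<close> by (cases "b = 0") auto
    then show ?thesis
      using that True \<open>b < 2*p\<close> \<open>r' = row p b\<close> by auto
  next
    case False
    then have "r' = row p 0"
      using differ by blast
    have "a \<noteq> 0"
      using False \<open>r = row p a\<close> by (cases "a = 0") auto
    then show ?thesis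
      using that \<open>a < 2*p\<close> \<open>r = row p a\<close> \<open>r' = row p 0\<close> by (auto simp: insert_commute)
  qed
qed

lemma preserves_sigma_first_row_indicator:
  assumes "2 \<le> p"
  shows "preserves sigma_rel (first_row_indicator p)"
  unfolding preserves_def
proof (intro allI impI)
  fix rs
  assume rs: "(\<forall>r\<in>set rs. snd (first_row_indicator p) r \<noteq> None) \<and>
    (\<forall>l<fst (first_row_indicator p). map (\<lambda>r. r!l) rs \<in> sigma_rel)"
  then have rows: "set rs \<subseteq> row p ` {..<2*p}"
    and columns: "\<forall>l<length (balanced_columns p). map (\<lambda>r. r!l) rs \<in> sigma_rel"
    by (auto simp: first_row_indicator_domain fst_first_row_indicator)
  then have "length rs = 4"
    using balanced_columns_nonempty[OF assms] by (auto simp: sigma_rel_def)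
  then obtain r0 r1 r2 r3 where rs_eq: "rs = [r0, r1, r2, r3]"
    by (auto simp: length_Suc_conv eval_nat_numeral)
  have "(r0 = row p 0) = (r1 = row p 0) \<or> (r2 = row p 0) = (r3 = row p 0)"
  proof (rule ccontr)
    assume "\<not> ?thesis"
    moreover have "r0 \<in> row p ` {..<2*p}" "r1 \<in> row p ` {..<2*p}"
      "r2 \<in> row p ` {..<2*p}" "r3 \<in> row p ` {..<2*p}"
      using rows by (simp_all add: rs_eq)
    ultimately obtain i j where "0 < i" "i < 2*p" "{r0, r1} = {row p 0, row p i}"
      and "0 < j" "j < 2*p" "{r2, r3} = {row p 0, row p j}"
      using rows_with_different_values[of r0 p r1] rows_with_different_values[of r2 p r3] by metis
    moreover obtain l where "l < length (balanced_columns p)"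
      "row p 0 ! l" "\<not> row p i ! l" "\<not> row p j ! l"
      using separating_column[of p 0 i j] assms \<open>0 < i\<close> \<open>0 < j\<close> \<open>i < 2*p\<close> \<open>j < 2*p\<close> by auto
    ultimately have "r0!l \<noteq> r1!l" "r2!l \<noteq> r3!l" "map (\<lambda>r. r!l) rs \<in> sigma_rel"
      using columns by (auto simp: doubleton_eq_iff)
    then show False
      by (simp add: rs_eq sigma_rel_def)
  qed
  then show "map (\<lambda>r. the (snd (first_row_indicator p) r)) rs \<in> sigma_rel"
    unfolding first_row_indicator_values[OF rows] by (simp add: rs_eq sigma_rel_def)
qed

lemma not_preserves_tau_first_row_indicator:
  assumes "2 \<le> p"
  shows "\<not> preserves (tau_rel p) (first_row_indicator p)"
proof
  assume preserves: "preserves (tau_rel p) (first_row_indicator p)"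
  define rs where "rs = map (row p) [0..<2*p]"
  have columns: "map (\<lambda>r. r!l) rs \<in> tau_rel p" if "l < length (balanced_columns p)" for l
  proof -
    have "balanced_columns p ! l \<in> set (balanced_columns p)"
      using that by simp
    moreover have "map (\<lambda>r. r!l) rs = balanced_columns p ! l"
      using calculation that by (intro nth_equalityI) (auto simp: rs_def nth_row set_balanced_columns)
    ultimately show ?thesis
      by (simp add: tau_rel_def set_balanced_columns)
  qed
  moreover have "\<forall>r\<in>set rs. snd (first_row_indicator p) r \<noteq> None"
    by (auto simp: rs_def snd_first_row_indicator)
  ultimately have "map (\<lambda>r. the (snd (first_row_indicator p) r)) rs \<in> tau_rel p"
    using preserves unfolding preserves_def fst_first_row_indicator by blast
  moreover have "map (\<lambda>r. the (snd (first_row_indicator p) r)) rs = map (\<lambda>r. r = row p 0) rs"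
    by (rule first_row_indicator_values) (auto simp: rs_def)
  moreover have "map (\<lambda>r. r = row p 0) rs = map (\<lambda>i. i \<in> {0}) [0..<2*p]"
    using inj_on_row[OF assms] assms by (auto simp: rs_def inj_on_eq_iff)
  moreover have "weight (map (\<lambda>i. i \<in> {0}) [0..<2*p]) = 1"
    using weight_indicator[of "{0}" "2*p"] assms by simp
  ultimately show False
    using assms by (simp add: tau_rel_def)
qed

lemma preserves_tau_first_row_indicator:
  assumes "2 \<le> p" and "coprime q p"
  shows "preserves (tau_rel q) (first_row_indicator p)"
  unfolding preserves_def
proof (intro allI impI)
  fix rs
  assume rs: "(\<forall>r\<in>set rs. snd (first_row_indicator p) r \<noteq> None) \<and>
    (\<forall>l<fst (first_row_indicator p). map (\<lambda>r. r!l) rs \<in> tau_rel q)"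
  then have rows: "set rs \<subseteq> row p ` {..<2*p}"
    and columns: "\<forall>l<length (balanced_columns p). map (\<lambda>r. r!l) rs \<in> tau_rel q"
    by (auto simp: first_row_indicator_domain fst_first_row_indicator)
  then have "length rs = 2*q"
    using balanced_columns_nonempty[OF assms(1)] by (auto simp: tau_rel_def)
  txt \<open>The column indicating T has weight the number of rows of rs lying in row p ` T.\<close>
  have "q dvd (\<Sum>i\<in>T. count_list rs (row p i))" if T: "T \<subseteq> {..<2*p}" "card T = p" for T
  proof -
    obtain l where l: "l < length (balanced_columns p)"
      "balanced_columns p ! l = map (\<lambda>i. i \<in> T) [0..<2*p]"
      using obtain_indicator_column[OF T] by blast
    have "r!l \<longleftrightarrow> r \<in> row p ` T" if r: "r \<in> set rs" for r
    proof -
      obtain m where "m < 2*p" "r = row p m"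
        using rows r by auto
      then show ?thesis
        using l T inj_on_row[OF assms(1)] by (auto simp: nth_row inj_on_eq_iff subset_eq)
    qed
    then have "weight (map (\<lambda>r. r!l) rs) = length (filter (\<lambda>r. r \<in> row p ` T) rs)"
      by (simp cong: filter_cong)
    also have "\<dots> = (\<Sum>i\<in>T. count_list rs (row p i))"
      using inj_on_subset[OF inj_on_row[OF assms(1)] T(1)] finite_subset[OF T(1)]
      by (simp add: length_filter_mem_image)
    moreover have "map (\<lambda>r. r!l) rs \<in> tau_rel q"
      using columns l(1) by blast
    ultimately show ?thesis
      by (simp add: tau_rel_def)
  qed
  then have "q dvd count_list rs (row p 0)"
    using dvd_if_dvd_all_half_sums[of p q "\<lambda>i. count_list rs (row p i)"] assms by simp
  moreover have "weight (map (\<lambda>r. r = row p 0) rs) = count_list rs (row p 0)"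
    using count_list_eq_length_filter[of rs "row p 0"] by (simp add: eq_commute[of _ "row p 0"])
  ultimately show "map (\<lambda>r. the (snd (first_row_indicator p) r)) rs \<in> tau_rel q"
    using rows \<open>length rs = 2*q\<close> by (simp add: first_row_indicator_values tau_rel_def)
qed

section \<open>Cardinality of I_str Omega1\<close>

lemma unary_closed_sigma: "unary_closed sigma_rel"
  by (auto simp: unary_closed_def sigma_rel_def)

lemma unary_closed_tau: "unary_closed (tau_rel q)"
  by (auto simp: unary_closed_def tau_rel_def weight_Not[unfolded weight_map] weight_replicate)

definition prime_indexed_clone :: "nat set \<Rightarrow> pfun set" where
  "prime_indexed_clone A = Pol (insert sigma_rel {tau_rel q | q. prime q \<and> q \<notin> A})"

lemma prime_indexed_clone_in_I_str: "prime_indexed_clone A \<in> I_str Omega1"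
proof -
  have "Omega1 \<subseteq> prime_indexed_clone A"
    unfolding prime_indexed_clone_def
    by (rule Omega1_subset_Pol) (auto simp: unary_closed_sigma unary_closed_tau)
  moreover have "prime_indexed_clone A \<inter> O2 \<subseteq> Omega1"
    by (auto simp: prime_indexed_clone_def Pol_def intro: total_preserving_sigma_in_Omega1)
  ultimately have "prime_indexed_clone A \<inter> O2 = Omega1"
    using Omega1_subset_O2 by blast
  then show ?thesis
    by (simp add: I_str_def prime_indexed_clone_def partial_clone_Pol strong_Pol)
qed

lemma first_row_indicator_in_prime_indexed_clone_iff:
  assumes "prime p"
  shows "first_row_indicator p \<in> prime_indexed_clone A \<longleftrightarrow> p \<in> A"
proof -
  have "2 \<le> p"
    using assms prime_ge_2_nat by blast
  have "preserves (tau_rel q) (first_row_indicator p)" if "prime q" "q \<noteq> p" for q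
    using preserves_tau_first_row_indicator[OF \<open>2 \<le> p\<close>] primes_coprime[OF that(1) assms that(2)] .
  then show ?thesis
    using not_preserves_tau_first_row_indicator[OF \<open>2 \<le> p\<close>] assms
      preserves_sigma_first_row_indicator[OF \<open>2 \<le> p\<close>] first_row_indicator_in_P2[OF \<open>2 \<le> p\<close>]
    by (auto simp: prime_indexed_clone_def Pol_def)
qed

lemma inj_on_prime_indexed_clone: "inj_on prime_indexed_clone (Pow {p. prime p})"
proof
  fix A B
  assume "A \<in> Pow {p. prime p}" "B \<in> Pow {p. prime p}" "prime_indexed_clone A = prime_indexed_clone B"
  then show "A = B"
    using first_row_indicator_in_prime_indexed_clone_iff by blast
qed

lemma countable_P2: "countable P2"
proof -
  define enc :: "pfun \<Rightarrow> nat \<times> bool option list" where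
    "enc F = (fst F, map (snd F) (List.n_lists (fst F) [True, False]))" for F
  have "inj_on enc P2"
  proof (rule inj_onI)
    fix F G
    assume "F \<in> P2" "G \<in> P2" "enc F = enc G"
    obtain n f m g where F: "F = (n, f)" and G: "G = (m, g)"
      by (cases F, cases G)
    have "n = m"
      using \<open>enc F = enc G\<close> by (simp add: enc_def F G)
    have "f xs = g xs" for xs
    proof (cases "length xs = n")
      case True
      then have "xs \<in> set (List.n_lists n [True, False])"
        by (auto simp: set_n_lists)
      then show ?thesis
        using \<open>enc F = enc G\<close> \<open>n = m\<close> by (simp add: enc_def F G)
    next
      case False
      have "\<forall>xs. f xs \<noteq> None \<longrightarrow> length xs = n" "\<forall>xs. g xs \<noteq> None \<longrightarrow> length xs = n"
        using \<open>F \<in> P2\<close> \<open>G \<in> P2\<close> \<open>n = m\<close> by (simp_all add: F G P2_def)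
      then have "f xs = None" "g xs = None"
        using False by blast+
      then show ?thesis
        by simp
    qed
    then show "F = G"
      using \<open>n = m\<close> by (simp add: F G fun_eq_iff)
  qed
  then show ?thesis
    by (rule countable_image_inj_on[rotated]) simp
qed

lemma I_str_Omega1_lepoll: "I_str Omega1 \<lesssim> (UNIV :: nat set set)"
proof -
  obtain e :: "pfun \<Rightarrow> nat" where "inj_on e P2"
    using countable_P2 by (rule countableE)
  moreover have "I_str Omega1 \<subseteq> Pow P2"
    by (auto simp: I_str_def partial_clone_def)
  ultimately have "inj_on (image e) (I_str Omega1)"
    by (rule inj_on_subset[OF inj_on_image_Pow])
  then show ?thesis
    unfolding lepoll_def by (intro exI[of _ "image e"]) simp
qed

lemma lepoll_I_str_Omega1: "(UNIV :: nat set set) \<lesssim> I_str Omega1"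
proof -
  have "(UNIV :: nat set) \<lesssim> {p :: nat. prime p}"
    by (rule infinite_le_lepoll[THEN iffD1, OF primes_infinite])
  then obtain e :: "nat \<Rightarrow> nat" where "inj e" "range e \<subseteq> {p. prime p}"
    by (auto simp: lepoll_def)
  have "inj (image e)"
    using inj_on_image_Pow[OF \<open>inj e\<close>] by simp
  moreover have "range (image e) \<subseteq> Pow {p. prime p}"
    using \<open>range e \<subseteq> {p. prime p}\<close> by auto
  then have "inj_on prime_indexed_clone (range (image e))"
    by (rule inj_on_subset[OF inj_on_prime_indexed_clone])
  ultimately have "inj (prime_indexed_clone \<circ> image e)"
    by (rule comp_inj_on)
  moreover have "range (prime_indexed_clone \<circ> image e) \<subseteq> I_str Omega1"
    using prime_indexed_clone_in_I_str by auto
  ultimately show ?thesis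
    unfolding lepoll_def by (intro exI[of _ "prime_indexed_clone \<circ> image e"] conjI)
qed

theorem mainTheorem9:
  shows "I_str Omega1 \<approx> (UNIV :: real set)"
proof -
  have "I_str Omega1 \<approx> (UNIV :: nat set set)"
    using lepoll_antisym[OF I_str_Omega1_lepoll lepoll_I_str_Omega1] .
  then show ?thesis
    using nat_sets_eqpoll_reals by (rule eqpoll_trans)
qed

end
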